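(* Let $R$ be a commutative ring with identity and let $(S,\leq)$ be a strictly ordered monoid. Suppose $S=S_1\sqcup S_2$ is a disjoint union of subsets $S_1,S_2$. Define $P:[[R^{S,\leq}]]\to[[R^{S,\leq}]]$ by $$P(f)(s)=\begin{cases} f(s), & s\in S_1,\\ 0, & s\in S_2,\end{cases}\qquad f\in [[R^{S,\leq}]],\ s\in S.$$ Then $([[R^{S,\leq}]],P)$ is a Rota-Baxter algebra (of weight $-1$) if and only if $S_1$ and $S_2$ are both subsemigroups of $S$ (i.e. each is closed under the monoid operation).
   Context: All monoids are commutative and written additively with neutral element $0$. An ordered set means a partially ordered set; it is artinian if every strictly decreasing sequence is finite, and narrow if every subset of pairwise incomparable elements is finite. A strictly ordered monoid is a commutative monoid $S$ with a partial order $\leq$ such that $s<s'$ implies $s+t<s'+t$ for all $s,s',t\in S$. The ring of generalized power series $[[R^{S,\leq}]]$ is the set of all maps $f:S\to R$ whose support $\mathrm{supp}(f)=\{s\in S: f(s)\neq 0\}$ is artinian and narrow, with pointwise addition and convolution product $(fg)(s)=\sum_{(u,v)} f(u)g(v)$, the sum over the (finite) set of pairs $(u,v)\in S\times S$ with $u+v=s$, $f(u)\neq0$, $g(v)\neq 0$. A Rota-Baxter algebra (of weight $-1$) is an associative $R$-algebra $A$ with an $R$-linear operator $P:A\to A$ satisfying $P(x)P(y)=P(xP(y))+P(P(x)y)-P(xy)$ for all $x,y\in A$. *)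

theory Defs
  imports Main
begin

definition strict_of :: "('a \<Rightarrow> 'a \<Rightarrow> bool) \<Rightarrow> 'a \<Rightarrow> 'a \<Rightarrow> bool" where
  "strict_of le x y \<longleftrightarrow> le x y \<and> x \<noteq> y"

definition strictly_ordered_monoid :: "('a::comm_monoid_add \<Rightarrow> 'a \<Rightarrow> bool) \<Rightarrow> bool" where
  "strictly_ordered_monoid le \<longleftrightarrow>
     (\<forall>x. le x x) \<and> (\<forall>x y. le x y \<and> le y x \<longrightarrow> x = y) \<and>
     (\<forall>x y z. le x y \<and> le y z \<longrightarrow> le x z) \<and>
     (\<forall>s s' t. strict_of le s s' \<longrightarrow> strict_of le (s + t) (s' + t))"

definition artinian_set :: "('a \<Rightarrow> 'a \<Rightarrow> bool) \<Rightarrow> 'a set \<Rightarrow> bool" where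
  "artinian_set le A \<longleftrightarrow>
     \<not> (\<exists>g::nat \<Rightarrow> 'a. (\<forall>n. g n \<in> A) \<and> (\<forall>n. strict_of le (g (Suc n)) (g n)))"

definition narrow_set :: "('a \<Rightarrow> 'a \<Rightarrow> bool) \<Rightarrow> 'a set \<Rightarrow> bool" where
  "narrow_set le A \<longleftrightarrow>
     (\<forall>B \<subseteq> A. (\<forall>x\<in>B. \<forall>y\<in>B. x \<noteq> y \<longrightarrow> \<not> le x y \<and> \<not> le y x) \<longrightarrow> finite B)"

definition supp_fun :: "('a \<Rightarrow> 'r::zero) \<Rightarrow> 'a set" where
  "supp_fun f = {s. f s \<noteq> 0}"

definition gps :: "('a \<Rightarrow> 'a \<Rightarrow> bool) \<Rightarrow> ('a \<Rightarrow> 'r::zero) set" where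
  "gps le = {f. artinian_set le (supp_fun f) \<and> narrow_set le (supp_fun f)}"

definition gps_mult :: "('a::monoid_add \<Rightarrow> 'r::comm_ring_1) \<Rightarrow> ('a \<Rightarrow> 'r) \<Rightarrow> 'a \<Rightarrow> 'r" where
  "gps_mult f g s = (\<Sum>(u, v) \<in> {(u, v). u + v = s \<and> f u \<noteq> 0 \<and> g v \<noteq> 0}. f u * g v)"

definition gps_rota_baxter ::
  "('a::comm_monoid_add \<Rightarrow> 'a \<Rightarrow> bool) \<Rightarrow> (('a \<Rightarrow> 'r::comm_ring_1) \<Rightarrow> ('a \<Rightarrow> 'r)) \<Rightarrow> bool" where
  "gps_rota_baxter le P \<longleftrightarrow>
     (\<forall>f \<in> gps le. P f \<in> gps le) \<and>
     (\<forall>f \<in> gps le. \<forall>g \<in> gps le. \<forall>c::'r.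
        P (\<lambda>s. c * f s + g s) = (\<lambda>s. c * P f s + P g s)) \<and>
     (\<forall>f \<in> gps le. \<forall>g \<in> gps le.
        gps_mult (P f) (P g) =
          (\<lambda>s. P (gps_mult f (P g)) s + P (gps_mult (P f) g) s - P (gps_mult f g) s))"

definition subsemigroup :: "'a::plus set \<Rightarrow> bool" where
  "subsemigroup A \<longleftrightarrow> (\<forall>x\<in>A. \<forall>y\<in>A. x + y \<in> A)"

end

theory Submission
  imports Defs "HOL-Library.Ramsey"
begin

text \<open>
  If \<open>S\<close> and its complement are both closed under addition, then for \<open>u + v = s\<close> the
  product \<open>P f u * P g v\<close> equals \<open>f u * P g v + P f u * g v - f u * g v\<close> when \<open>s \<in> S\<close>
  (at least one of \<open>u, v\<close> lies in \<open>S\<close>) and vanishes otherwise (not both lie in \<open>S\<close>);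
  summing over the finitely many decompositions of \<open>s\<close> gives the Rota-Baxter identity.
  Finiteness of these decompositions comes from Ramsey's theorem: an infinite sequence in
  an artinian narrow set has an ascending subsequence, and two distinct componentwise
  ascending pairs have strictly increasing sums. Conversely, evaluating the identity on
  monomials \<open>x\<^sup>a, x\<^sup>b\<close> at \<open>a + b\<close> shows that \<open>a, b \<in> S\<close> forces \<open>a + b \<in> S\<close> and
  \<open>a, b \<notin> S\<close> forces \<open>a + b \<notin> S\<close>.
\<close>

lemma infinite_subseq_trichotomy:
  fixes x :: "nat \<Rightarrow> 'a" and le :: "'a \<Rightarrow> 'a \<Rightarrow> bool"
  assumes "infinite Z"
  obtains (ascending) Y where "Y \<subseteq> Z" "infinite Y"
      "\<And>i j. i \<in> Y \<Longrightarrow> j \<in> Y \<Longrightarrow> i < j \<Longrightarrow> le (x i) (x j)"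
  | (descending) Y where "Y \<subseteq> Z" "infinite Y"
      "\<And>i j. i \<in> Y \<Longrightarrow> j \<in> Y \<Longrightarrow> i < j \<Longrightarrow> le (x j) (x i) \<and> \<not> le (x i) (x j)"
  | (incomparable) Y where "Y \<subseteq> Z" "infinite Y"
      "\<And>i j. i \<in> Y \<Longrightarrow> j \<in> Y \<Longrightarrow> i < j \<Longrightarrow> \<not> le (x i) (x j) \<and> \<not> le (x j) (x i)"
proof -
  define colour :: "nat set \<Rightarrow> nat" where
    "colour X = (if le (x (Min X)) (x (Max X)) then 0
                 else if le (x (Max X)) (x (Min X)) then 1 else 2)" for X
  have "\<exists>Y t. Y \<subseteq> Z \<and> infinite Y \<and> t < 3 \<and>
      (\<forall>i\<in>Y. \<forall>j\<in>Y. i \<noteq> j \<longrightarrow> colour {i, j} = t)"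
    by (rule Ramsey2[OF assms]) (auto simp: colour_def)
  then obtain Y t where Y: "Y \<subseteq> Z" "infinite Y" "t < 3"
    and homogeneous: "\<And>i j. i \<in> Y \<Longrightarrow> j \<in> Y \<Longrightarrow> i \<noteq> j \<Longrightarrow> colour {i, j} = t"
    by blast
  have colour_pair: "colour {i, j} = (if le (x i) (x j) then 0 else if le (x j) (x i) then 1 else 2)"
    if "i < j" for i j
  proof -
    have "Min {i, j} = i" "Max {i, j} = j" using that by auto
    then show ?thesis by (simp add: colour_def)
  qed
  have pair_colour: "(if le (x i) (x j) then 0 else if le (x j) (x i) then 1 else 2) = t"
    if "i \<in> Y" "j \<in> Y" "i < j" for i j
    using homogeneous[OF that(1,2)] colour_pair[OF that(3)] that(3) by simp
  consider "t = 0" | "t = 1" | "t = 2" using \<open>t < 3\<close> by linarith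
  then show thesis
  proof cases
    case 1
    show thesis
    proof (rule ascending[OF Y(1,2)])
      fix i j assume "i \<in> Y" "j \<in> Y" "i < j"
      from pair_colour[OF this] 1 show "le (x i) (x j)"
        by (cases "le (x i) (x j)"; cases "le (x j) (x i)") simp_all
    qed
  next
    case 2
    show thesis
    proof (rule descending[OF Y(1,2)])
      fix i j assume "i \<in> Y" "j \<in> Y" "i < j"
      from pair_colour[OF this] 2 show "le (x j) (x i) \<and> \<not> le (x i) (x j)"
        by (cases "le (x i) (x j)"; cases "le (x j) (x i)") simp_all
    qed
  next
    case 3
    show thesis
    proof (rule incomparable[OF Y(1,2)])
      fix i j assume "i \<in> Y" "j \<in> Y" "i < j"
      from pair_colour[OF this] 3 show "\<not> le (x i) (x j) \<and> \<not> le (x j) (x i)"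
        by (cases "le (x i) (x j)"; cases "le (x j) (x i)") simp_all
    qed
  qed
qed

lemma strictly_ordered_monoidD:
  assumes "strictly_ordered_monoid le"
  shows strictly_ordered_monoid_refl: "le x x"
    and strictly_ordered_monoid_antisym: "le x y \<Longrightarrow> le y x \<Longrightarrow> x = y"
    and strictly_ordered_monoid_trans: "le x y \<Longrightarrow> le y z \<Longrightarrow> le x z"
    and strictly_ordered_monoid_strict_add: "strict_of le x y \<Longrightarrow> strict_of le (x + z) (y + z)"
  using assms unfolding strictly_ordered_monoid_def by blast+

lemma strictly_ordered_monoid_add_strict_mono:
  assumes som: "strictly_ordered_monoid le"
    and "le a b" "le c d" "(a, c) \<noteq> (b, d)"
  shows "strict_of le (a + c) (b + d)"
proof -
  have right: "le (b + c) (b + d)"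
  proof (cases "c = d")
    case False
    with \<open>le c d\<close> have "strict_of le (c + b) (d + b)"
      using strictly_ordered_monoid_strict_add[OF som] by (simp add: strict_of_def)
    then show ?thesis by (simp add: strict_of_def add.commute)
  qed (simp add: strictly_ordered_monoid_refl[OF som])
  show ?thesis
  proof (cases "a = b")
    case True
    with assms(3,4) have "strict_of le (c + a) (d + a)"
      using strictly_ordered_monoid_strict_add[OF som] by (simp add: strict_of_def)
    with True show ?thesis by (simp add: add.commute)
  next
    case False
    with \<open>le a b\<close> have "strict_of le (a + c) (b + c)"
      using strictly_ordered_monoid_strict_add[OF som] by (simp add: strict_of_def)
    with right show ?thesis
      unfolding strict_of_def
      by (metis strictly_ordered_monoid_antisym[OF som] strictly_ordered_monoid_trans[OF som])
  qed
qed

lemma artinian_narrow_ascending_subseq: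
  fixes x :: "nat \<Rightarrow> 'a"
  assumes refl: "\<And>a. le a a"
    and art: "artinian_set le A" and nar: "narrow_set le A"
    and "infinite Z" and in_A: "\<And>i. i \<in> Z \<Longrightarrow> x i \<in> A"
  obtains Y where "Y \<subseteq> Z" "infinite Y" "\<And>i j. i \<in> Y \<Longrightarrow> j \<in> Y \<Longrightarrow> i < j \<Longrightarrow> le (x i) (x j)"
  using \<open>infinite Z\<close>
proof (cases rule: infinite_subseq_trichotomy[where le = le and x = x])
  case (ascending Y)
  with that show thesis by blast
next
  case (descending Y)
  define g where "g n = x (enumerate Y n)" for n
  have "g n \<in> A \<and> strict_of le (g (Suc n)) (g n)" for n
  proof -
    have "enumerate Y n \<in> Y" "enumerate Y (Suc n) \<in> Y" "enumerate Y n < enumerate Y (Suc n)"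
      using \<open>infinite Y\<close> by (simp_all add: enumerate_in_set enumerate_step)
    then show ?thesis
      using descending(1,3) in_A refl unfolding g_def strict_of_def by (metis subsetD)
  qed
  with art show thesis unfolding artinian_set_def by blast
next
  case (incomparable Y)
  have incomparable_neq: "\<not> le (x i) (x j)" if "i \<in> Y" "j \<in> Y" "i \<noteq> j" for i j
    using incomparable(3) that by (metis linorder_neqE_nat)
  then have "inj_on x Y" using refl by (metis inj_onI)
  moreover have "finite (x ` Y)"
  proof -
    have "x ` Y \<subseteq> A" using incomparable(1) in_A by blast
    moreover have "\<forall>a\<in>x ` Y. \<forall>b\<in>x ` Y. a \<noteq> b \<longrightarrow> \<not> le a b \<and> \<not> le b a"
      using incomparable_neq by blast
    ultimately show ?thesis using nar unfolding narrow_set_def by blast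
  qed
  ultimately have "finite Y" by (simp add: finite_image_iff)
  with \<open>infinite Y\<close> show thesis by contradiction
qed

lemma finite_sum_pairs_artinian_narrow:
  assumes som: "strictly_ordered_monoid le"
    and "artinian_set le A" "narrow_set le A" "artinian_set le B" "narrow_set le B"
  shows "finite {(u, v). u + v = s \<and> u \<in> A \<and> v \<in> B}"
proof (rule ccontr)
  let ?I = "{(u, v). u + v = s \<and> u \<in> A \<and> v \<in> B}"
  assume "infinite ?I"
  then obtain p :: "nat \<Rightarrow> _" where "inj p" and p_in: "range p \<subseteq> ?I"
    using infinite_iff_countable_subset[of ?I] by meson
  have p_sum: "fst (p i) + snd (p i) = s" "fst (p i) \<in> A" "snd (p i) \<in> B" for i
    using range_subsetD[OF p_in, of i] by (simp_all add: split_beta)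
  note refl = strictly_ordered_monoid_refl[OF som]
  obtain Y1 where "infinite Y1"
    and Y1: "\<And>i j. i \<in> Y1 \<Longrightarrow> j \<in> Y1 \<Longrightarrow> i < j \<Longrightarrow> le (fst (p i)) (fst (p j))"
    by (rule artinian_narrow_ascending_subseq[OF refl assms(2,3) infinite_UNIV_nat, of "\<lambda>i. fst (p i)"])
      (simp_all add: p_sum)
  obtain Y2 where "Y2 \<subseteq> Y1" "infinite Y2"
    and Y2: "\<And>i j. i \<in> Y2 \<Longrightarrow> j \<in> Y2 \<Longrightarrow> i < j \<Longrightarrow> le (snd (p i)) (snd (p j))"
    by (rule artinian_narrow_ascending_subseq[OF refl assms(4,5) \<open>infinite Y1\<close>, of "\<lambda>i. snd (p i)"])
      (simp_all add: p_sum)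
  define i j where "i = enumerate Y2 0" and "j = enumerate Y2 1"
  have ij: "i \<in> Y2" "j \<in> Y2" "i < j"
    using \<open>infinite Y2\<close> unfolding i_def j_def by (simp_all add: enumerate_in_set enumerate_step)
  have "strict_of le (fst (p i) + snd (p i)) (fst (p j) + snd (p j))"
  proof (rule strictly_ordered_monoid_add_strict_mono[OF som])
    show "le (fst (p i)) (fst (p j))" using Y1 ij \<open>Y2 \<subseteq> Y1\<close> by blast
    show "le (snd (p i)) (snd (p j))" using Y2 ij by blast
    show "(fst (p i), snd (p i)) \<noteq> (fst (p j), snd (p j))"
      using \<open>inj p\<close> ij(3) by (simp add: inj_eq)
  qed
  then show False by (simp add: p_sum strict_of_def)
qed

lemma gps_mult_eq_sum:
  assumes "finite J" "{(u, v). u + v = s \<and> f u \<noteq> 0 \<and> g v \<noteq> 0} \<subseteq> J"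
    and "J \<subseteq> {(u, v). u + v = s}"
  shows "gps_mult f g s = (\<Sum>(u, v)\<in>J. f u * g v)"
  unfolding gps_mult_def
  by (rule sum.mono_neutral_left[OF assms(1,2)]) (use assms(3) in auto)

lemma gps_mult_zero_left [simp]: "gps_mult (\<lambda>_. 0) g = (\<lambda>_. 0)"
  by (simp add: gps_mult_def fun_eq_iff)

lemma gps_mult_zero_right [simp]: "gps_mult f (\<lambda>_. 0) = (\<lambda>_. 0)"
  by (simp add: gps_mult_def fun_eq_iff)

lemma artinian_set_subset: "artinian_set le B \<Longrightarrow> A \<subseteq> B \<Longrightarrow> artinian_set le A"
  unfolding artinian_set_def by blast

lemma narrow_set_subset: "narrow_set le B \<Longrightarrow> A \<subseteq> B \<Longrightarrow> narrow_set le A"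
  unfolding narrow_set_def by (meson order_trans)

lemma gps_mem_if_supp_subset:
  assumes "g \<in> gps le" "supp_fun f \<subseteq> supp_fun g"
  shows "f \<in> gps le"
  using assms artinian_set_subset narrow_set_subset unfolding gps_def by blast

definition gps_monomial :: "'a \<Rightarrow> 'a \<Rightarrow> 'r::zero_neq_one" where
  "gps_monomial a s = (if s = a then 1 else 0)"

lemma gps_monomial_in_gps: "gps_monomial a \<in> gps le"
proof -
  have "supp_fun (gps_monomial a) = {a}"
    by (simp add: supp_fun_def gps_monomial_def)
  then show ?thesis
    unfolding gps_def artinian_set_def narrow_set_def strict_of_def
    by (auto intro: finite_subset)
qed

lemma gps_mult_monomial:
  "gps_mult (gps_monomial a) (gps_monomial b) = (gps_monomial (a + b) :: 'a::monoid_add \<Rightarrow> 'r::comm_ring_1)"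
proof
  fix s
  have "{(u, v). u + v = s \<and> gps_monomial a u \<noteq> (0::'r) \<and> gps_monomial b v \<noteq> (0::'r)} =
      (if s = a + b then {(a, b)} else {})"
    by (auto simp: gps_monomial_def split: if_splits)
  then show "gps_mult (gps_monomial a) (gps_monomial b) s = (gps_monomial (a + b) s :: 'r)"
    by (simp add: gps_mult_def gps_monomial_def)
qed

definition gps_proj :: "'a set \<Rightarrow> ('a \<Rightarrow> 'r::zero) \<Rightarrow> 'a \<Rightarrow> 'r" where
  "gps_proj S f s = (if s \<in> S then f s else 0)"

lemma gps_proj_in_gps: "f \<in> gps le \<Longrightarrow> gps_proj S f \<in> gps le"
  by (rule gps_mem_if_supp_subset) (auto simp: supp_fun_def gps_proj_def)

lemma gps_proj_linear:
  fixes f g :: "'a \<Rightarrow> 'r::semiring_0"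
  shows "gps_proj S (\<lambda>s. c * f s + g s) = (\<lambda>s. c * gps_proj S f s + gps_proj S g s)"
  by (simp add: fun_eq_iff gps_proj_def)

lemma gps_proj_monomial:
  "gps_proj S (gps_monomial a) = (if a \<in> S then gps_monomial a else (\<lambda>_. 0))"
  by (auto simp: fun_eq_iff gps_proj_def gps_monomial_def)

lemma gps_proj_mult_pointwise:
  fixes f g :: "'a::plus \<Rightarrow> 'r::comm_ring_1"
  assumes "subsemigroup S" "subsemigroup (- S)"
  shows "gps_proj S f u * gps_proj S g v =
    (if u + v \<in> S then f u * gps_proj S g v + gps_proj S f u * g v - f u * g v else 0)"
  using assms unfolding subsemigroup_def gps_proj_def by (auto simp: algebra_simps)

lemma gps_proj_rota_baxter_identity:
  fixes f g :: "'a::comm_monoid_add \<Rightarrow> 'r::comm_ring_1"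
  assumes som: "strictly_ordered_monoid le"
    and f: "f \<in> gps le" and g: "g \<in> gps le"
    and closed: "subsemigroup S" "subsemigroup (- S)"
  shows "gps_mult (gps_proj S f) (gps_proj S g) =
    (\<lambda>s. gps_proj S (gps_mult f (gps_proj S g)) s + gps_proj S (gps_mult (gps_proj S f) g) s
      - gps_proj S (gps_mult f g) s)"
proof
  fix s
  define J where "J = {(u, v). u + v = s \<and> u \<in> supp_fun f \<and> v \<in> supp_fun g}"
  have "finite J"
    unfolding J_def using f g
    by (intro finite_sum_pairs_artinian_narrow[OF som]) (auto simp: gps_def)
  have sum_over_J: "gps_mult F G s = (\<Sum>(u, v)\<in>J. F u * G v)"
    if "\<And>u. F u \<noteq> 0 \<Longrightarrow> f u \<noteq> 0" "\<And>v. G v \<noteq> 0 \<Longrightarrow> g v \<noteq> 0" for F G :: "'a \<Rightarrow> 'r"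
    by (rule gps_mult_eq_sum[OF \<open>finite J\<close>]) (auto simp: J_def supp_fun_def that)
  have proj_supp: "gps_proj S h u \<noteq> 0 \<Longrightarrow> h u \<noteq> 0" for h :: "'a \<Rightarrow> 'r" and u
    by (simp add: gps_proj_def split: if_splits)
  have "gps_mult (gps_proj S f) (gps_proj S g) s = (\<Sum>(u, v)\<in>J. gps_proj S f u * gps_proj S g v)"
    by (rule sum_over_J) (simp_all add: proj_supp)
  also have "\<dots> = (\<Sum>(u, v)\<in>J. if s \<in> S
      then f u * gps_proj S g v + gps_proj S f u * g v - f u * g v else 0)"
    by (rule sum.cong) (auto simp: J_def gps_proj_mult_pointwise[OF closed])
  also have "\<dots> = (if s \<in> S then (\<Sum>(u, v)\<in>J. f u * gps_proj S g v)
      + (\<Sum>(u, v)\<in>J. gps_proj S f u * g v) - (\<Sum>(u, v)\<in>J. f u * g v) else 0)"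
    by (simp add: split_beta sum.distrib sum_subtractf)
  also have "\<dots> = gps_proj S (gps_mult f (gps_proj S g)) s + gps_proj S (gps_mult (gps_proj S f) g) s
      - gps_proj S (gps_mult f g) s"
  proof -
    have "gps_mult f (gps_proj S g) s = (\<Sum>(u, v)\<in>J. f u * gps_proj S g v)"
      "gps_mult (gps_proj S f) g s = (\<Sum>(u, v)\<in>J. gps_proj S f u * g v)"
      "gps_mult f g s = (\<Sum>(u, v)\<in>J. f u * g v)"
      by (rule sum_over_J; simp add: proj_supp)+
    then show ?thesis by (simp add: gps_proj_def)
  qed
  finally show "gps_mult (gps_proj S f) (gps_proj S g) s = \<dots>" .
qed

lemma subsemigroups_if_gps_rota_baxter_proj:
  fixes le :: "'a::comm_monoid_add \<Rightarrow> 'a \<Rightarrow> bool"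
  assumes "gps_rota_baxter le (gps_proj S :: ('a \<Rightarrow> 'r::comm_ring_1) \<Rightarrow> _)"
  shows "subsemigroup S \<and> subsemigroup (- S)"
proof -
  let ?P = "gps_proj S :: ('a \<Rightarrow> 'r) \<Rightarrow> _"
  have rb: "gps_mult (?P (gps_monomial a)) (?P (gps_monomial b)) =
      (\<lambda>s. ?P (gps_mult (gps_monomial a) (?P (gps_monomial b))) s
        + ?P (gps_mult (?P (gps_monomial a)) (gps_monomial b)) s
        - ?P (gps_mult (gps_monomial a) (gps_monomial b)) s)" for a b
    using assms gps_monomial_in_gps[of a le] gps_monomial_in_gps[of b le]
    unfolding gps_rota_baxter_def by blast
  have "a + b \<in> S" if "a \<in> S" "b \<in> S" for a b
  proof (rule ccontr)
    assume "a + b \<notin> S"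
    from that have "?P (gps_monomial a) = gps_monomial a" "?P (gps_monomial b) = gps_monomial b"
      by (simp_all add: gps_proj_monomial)
    with fun_cong[OF rb[of a b], of "a + b"] \<open>a + b \<notin> S\<close> show False
      by (simp add: gps_mult_monomial gps_proj_def gps_monomial_def)
  qed
  moreover have "a + b \<notin> S" if "a \<notin> S" "b \<notin> S" for a b
  proof
    assume "a + b \<in> S"
    from that have "?P (gps_monomial a) = (\<lambda>_. 0)" "?P (gps_monomial b) = (\<lambda>_. 0)"
      by (simp_all add: gps_proj_monomial)
    with fun_cong[OF rb[of a b], of "a + b"] \<open>a + b \<in> S\<close> show False
      by (simp add: gps_mult_monomial gps_proj_def gps_monomial_def)
  qed
  ultimately show ?thesis unfolding subsemigroup_def by blast
qed

lemma gps_rota_baxter_proj_iff: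
  fixes le :: "'a::comm_monoid_add \<Rightarrow> 'a \<Rightarrow> bool"
  assumes "strictly_ordered_monoid le"
  shows "gps_rota_baxter le (gps_proj S :: ('a \<Rightarrow> 'r::comm_ring_1) \<Rightarrow> _)
    \<longleftrightarrow> subsemigroup S \<and> subsemigroup (- S)"
  using subsemigroups_if_gps_rota_baxter_proj
    gps_proj_in_gps gps_proj_linear gps_proj_rota_baxter_identity[OF assms]
  unfolding gps_rota_baxter_def by blast

theorem theorem2p1:
  fixes le :: "'a::comm_monoid_add \<Rightarrow> 'a \<Rightarrow> bool"
    and S1 S2 :: "'a set"
    and P :: "('a \<Rightarrow> 'r::comm_ring_1) \<Rightarrow> ('a \<Rightarrow> 'r)"
  assumes "strictly_ordered_monoid le"
    and "S1 \<union> S2 = UNIV" and "S1 \<inter> S2 = {}"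
    and "\<And>f s. P f s = (if s \<in> S1 then f s else 0)"
  shows "gps_rota_baxter le P \<longleftrightarrow> subsemigroup S1 \<and> subsemigroup S2"
proof -
  have "P = gps_proj S1" using assms(4) by (simp add: fun_eq_iff gps_proj_def)
  moreover have "S2 = - S1" using assms(2,3) by blast
  ultimately show ?thesis using gps_rota_baxter_proj_iff[OF assms(1)] by simp
qed

end
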